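(* For every standard allocation rule $f$, the mechanism $\mathrm{Truthful}(f)$ is individually rational, truthful and budget feasible. Precisely, for every instance and every seller $i$: (a) $P_{i,r_i}(c_i)\ge c_if_{r_i}(c_i/u_i)$; (b) for every report $\bar c_i\ge0$, $P_{i,r_i}(\bar c_i)-c_if_{r_i}(\bar c_i/u_i)\le P_{i,r_i}(c_i)-c_if_{r_i}(c_i/u_i)$, where $r_i$ depends only on the other sellers' costs; and (c) $\sum_{i\in S}P_{i,r_i}(c_i)\le B$.
   Context: Setting: a buyer with budget $B>0$ faces a finite set $S$ of sellers; seller $i$ owns one divisible item giving utility $u_i>0$ and has private cost $c_i\ge0$; buying fraction $x_i\in[0,1]$ costs $x_ic_i$. A standard allocation rule is a non-increasing $f:[0,\infty)\to[0,1]$ with $f(0)=1$, $f(e-1)=0$. For $r>0$: $f_r(x)=f(x/r)$, $Q_r(x)=xf_r(x)+\int_x^\infty f_r(y)\,dy$, $P_{i,r}(x)=u_iQ_r(x/u_i)$. $\mathrm{EnvyFree}(f)$ on cost vector $c$ has stopping rate the value at which, decreasing $r$ from $\infty$, the nondecreasing function $r\mapsto\sum_iP_{i,r}(c_i)$ first equals $B$. $\mathrm{Truthful}(f)$ on reported costs $c$: for each $i$, $r_i$ is the stopping rate of $\mathrm{EnvyFree}(f)$ on the cost vector obtained from $c$ by setting the $i$-th cost to $0$ (so $r_i$ does not depend on $i$'s report); it buys $f_{r_i}(c_i/u_i)$ of item $i$ and pays $P_{i,r_i}(c_i)$ to seller $i$. *)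

theory Defs
  imports "HOL-Analysis.Analysis"
begin

definition standard_alloc :: "(real \<Rightarrow> real) \<Rightarrow> bool" where
  "standard_alloc f \<longleftrightarrow>
     (\<forall>x\<ge>0. 0 \<le> f x \<and> f x \<le> 1) \<and>
     (\<forall>x y. 0 \<le> x \<longrightarrow> x \<le> y \<longrightarrow> f y \<le> f x) \<and>
     f 0 = 1 \<and> f (exp 1 - 1) = 0"

definition f_r :: "(real \<Rightarrow> real) \<Rightarrow> real \<Rightarrow> real \<Rightarrow> real" where
  "f_r f r x = f (x / r)"

definition Q_r :: "(real \<Rightarrow> real) \<Rightarrow> real \<Rightarrow> real \<Rightarrow> real" where
  "Q_r f r x = x * f_r f r x + integral {x..} (f_r f r)"

definition P_ir :: "(real \<Rightarrow> real) \<Rightarrow> ('a \<Rightarrow> real) \<Rightarrow> 'a \<Rightarrow> real \<Rightarrow> real \<Rightarrow> real" where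
  "P_ir f u i r x = u i * Q_r f r (x / u i)"

definition total_pay :: "(real \<Rightarrow> real) \<Rightarrow> 'a set \<Rightarrow> ('a \<Rightarrow> real) \<Rightarrow> ('a \<Rightarrow> real) \<Rightarrow> real \<Rightarrow> real" where
  "total_pay f S u c r = (\<Sum>i\<in>S. P_ir f u i r (c i))"

text \<open>r is the stopping rate of EnvyFree(f) on c: decreasing r from infinity,
  r is the first value at which the total equals B, i.e. the total equals B at r
  and differs from B at every larger rate.\<close>
definition is_stopping_rate ::
  "(real \<Rightarrow> real) \<Rightarrow> 'a set \<Rightarrow> ('a \<Rightarrow> real) \<Rightarrow> real \<Rightarrow> ('a \<Rightarrow> real) \<Rightarrow> real \<Rightarrow> bool" where
  "is_stopping_rate f S u B c r \<longleftrightarrow>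
     0 < r \<and> total_pay f S u c r = B \<and> (\<forall>r'>r. total_pay f S u c r' \<noteq> B)"

definition stopping_rate ::
  "(real \<Rightarrow> real) \<Rightarrow> 'a set \<Rightarrow> ('a \<Rightarrow> real) \<Rightarrow> real \<Rightarrow> ('a \<Rightarrow> real) \<Rightarrow> real" where
  "stopping_rate f S u B c = (THE r. is_stopping_rate f S u B c r)"

definition truthful_rate ::
  "(real \<Rightarrow> real) \<Rightarrow> 'a set \<Rightarrow> ('a \<Rightarrow> real) \<Rightarrow> real \<Rightarrow> ('a \<Rightarrow> real) \<Rightarrow> 'a \<Rightarrow> real" where
  "truthful_rate f S u B c i = stopping_rate f S u B (c(i := 0))"

definition truthful_alloc ::
  "(real \<Rightarrow> real) \<Rightarrow> 'a set \<Rightarrow> ('a \<Rightarrow> real) \<Rightarrow> real \<Rightarrow> ('a \<Rightarrow> real) \<Rightarrow> 'a \<Rightarrow> real" where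
  "truthful_alloc f S u B c i = f_r f (truthful_rate f S u B c i) (c i / u i)"

definition truthful_pay ::
  "(real \<Rightarrow> real) \<Rightarrow> 'a set \<Rightarrow> ('a \<Rightarrow> real) \<Rightarrow> real \<Rightarrow> ('a \<Rightarrow> real) \<Rightarrow> 'a \<Rightarrow> real" where
  "truthful_pay f S u B c i = P_ir f u i (truthful_rate f S u B c i) (c i)"

end

theory Submission
  imports Defs
begin

text \<open>For a non-increasing g \<ge> 0 vanishing at infinity put Q(x) = x g(x) + int_x^oo g.
  A seller with true cost x who reports y gains Q(y) - x g(y) = (y - x) g(y) + int_y^oo g, and
  this is at most int_x^oo g, because the integral of g between x and y lies between the
  rectangles of heights g(x) and g(y). So truthful reporting maximises utility, and that utility
  is non-negative; the rate r_i offered to seller i does not depend on i's report. For the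
  budget, take the seller i0 with the largest rate R: payments grow with the rate and shrink with
  the cost, so the total payment is at most the total at rate R with the cost of i0 set to 0,
  which is B by the choice of r_i0.\<close>

locale antimono_vanishing =
  fixes g :: "real \<Rightarrow> real" and M :: real
  assumes nonneg: "\<And>y. 0 \<le> y \<Longrightarrow> 0 \<le> g y"
    and antimono: "\<And>y z. 0 \<le> y \<Longrightarrow> y \<le> z \<Longrightarrow> g z \<le> g y"
    and vanishing: "\<And>y. M \<le> y \<Longrightarrow> g y = 0"
begin

lemma integrable_on_interval:
  assumes "0 \<le> a" shows "g integrable_on {a..b}"
proof -
  have "mono_on {a..b} (\<lambda>y. - g y)"
    by (rule mono_onI) (use assms antimono in auto)
  then have "(\<lambda>y. - (- g y)) integrable_on {a..b}"
    by (intro integrable_neg integrable_on_mono_on)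
  then show ?thesis by simp
qed

lemma tail_integral_eq_interval:
  assumes "x \<le> K" "M \<le> K"
  shows "integral {x..} g = integral {x..K} g"
proof -
  have "(\<lambda>y. if y \<in> {x..} then g y else 0) = (\<lambda>y. if y \<in> {x..K} then g y else 0)"
    using vanishing assms by (auto simp: fun_eq_iff)
  then show ?thesis by (metis integral_restrict_UNIV)
qed

lemma tail_integral_nonneg:
  assumes "0 \<le> x" shows "0 \<le> integral {x..} g"
  using assms tail_integral_eq_interval[of x "max x M"]
  by (auto intro!: integral_nonneg integrable_on_interval nonneg)

lemma tail_integral_diff:
  assumes "0 \<le> x" "x \<le> y"
  shows "integral {x..} g - integral {y..} g = integral {x..y} g"
proof -
  define K where "K = max y M"
  have "integral {x..y} g + integral {y..K} g = integral {x..K} g"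
    using Henstock_Kurzweil_Integration.integral_combine[where a=x and c=y and b=K and f=g]
      integrable_on_interval[of x K] assms
    by (auto simp: K_def)
  moreover have "integral {x..} g = integral {x..K} g" "integral {y..} g = integral {y..K} g"
    using assms by (auto intro!: tail_integral_eq_interval simp: K_def)
  ultimately show ?thesis by linarith
qed

lemma integral_interval_bounds:
  assumes "0 \<le> x" "x \<le> y"
  shows "(y - x) * g y \<le> integral {x..y} g" "integral {x..y} g \<le> (y - x) * g x"
proof -
  have "integral {x..y} (\<lambda>t. g y) \<le> integral {x..y} g"
    using assms by (intro integral_le integrable_on_interval) (auto intro: antimono)
  then show "(y - x) * g y \<le> integral {x..y} g" using assms by simp
  have "integral {x..y} g \<le> integral {x..y} (\<lambda>t. g x)"
    using assms by (intro integral_le integrable_on_interval) (auto intro: antimono)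
  then show "integral {x..y} g \<le> (y - x) * g x" using assms by simp
qed

lemma misreport_gain_le:
  assumes "0 \<le> x" "0 \<le> y"
  shows "(y - x) * g y + integral {y..} g \<le> integral {x..} g"
proof (cases "x \<le> y")
  case True
  with tail_integral_diff[of x y] integral_interval_bounds[of x y] assms show ?thesis
    by linarith
next
  case False
  then have "y \<le> x" by simp
  with tail_integral_diff[of y x] integral_interval_bounds[of y x] assms show ?thesis
    by (simp add: algebra_simps)
qed

lemma threshold_payment_antimono:
  assumes "0 \<le> x" "x \<le> y"
  shows "y * g y + integral {y..} g \<le> x * g x + integral {x..} g"
proof -
  have "x * g y \<le> x * g x" using assms antimono by (intro mult_left_mono) auto
  with misreport_gain_le[of x y] assms show ?thesis by (simp add: algebra_simps)
qed

end

lemma tail_integral_mono: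
  assumes "antimono_vanishing g M" "antimono_vanishing h N"
    and "\<And>y. 0 \<le> y \<Longrightarrow> g y \<le> h y" "0 \<le> x"
  shows "integral {x..} g \<le> integral {x..} h"
proof -
  define K where "K = max x (max M N)"
  have "integral {x..} g = integral {x..K} g" "integral {x..} h = integral {x..K} h"
    using antimono_vanishing.tail_integral_eq_interval[OF assms(1), of x K]
      antimono_vanishing.tail_integral_eq_interval[OF assms(2), of x K]
    by (auto simp: K_def)
  moreover have "integral {x..K} g \<le> integral {x..K} h"
    using assms antimono_vanishing.integrable_on_interval[OF assms(1)]
      antimono_vanishing.integrable_on_interval[OF assms(2)]
    by (intro integral_le) auto
  ultimately show ?thesis by simp
qed

lemma standard_alloc_scaled:
  assumes std: "standard_alloc f" and r: "0 < r"
  shows "antimono_vanishing (f_r f r) (r * (exp 1 - 1))"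
proof -
  have f_nonneg: "\<And>x. 0 \<le> x \<Longrightarrow> 0 \<le> f x"
    and f_antimono: "\<And>x y. 0 \<le> x \<Longrightarrow> x \<le> y \<Longrightarrow> f y \<le> f x"
    and f_vanishes: "f (exp 1 - 1) = 0"
    using std unfolding standard_alloc_def by blast+
  have e: "0 \<le> exp 1 - (1::real)" by simp
  show ?thesis
  proof
    fix y :: real assume "0 \<le> y" then show "0 \<le> f_r f r y"
      unfolding f_r_def using r f_nonneg by simp
  next
    fix y z :: real assume "0 \<le> y" "y \<le> z"
    moreover have "y / r \<le> z / r" using calculation r by (simp add: divide_right_mono)
    ultimately show "f_r f r z \<le> f_r f r y"
      unfolding f_r_def using r f_antimono by simp
  next
    fix y :: real assume "r * (exp 1 - 1) \<le> y"
    then have "exp 1 - 1 \<le> y / r" using r by (simp add: field_simps)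
    then show "f_r f r y = 0"
      unfolding f_r_def using f_antimono[OF e] f_nonneg e f_vanishes
      by (metis order.trans order_antisym)
  qed
qed

lemma stopping_rate_eq:
  assumes "is_stopping_rate f S u B c r"
  shows "stopping_rate f S u B c = r"
proof -
  have "r' = r" if "is_stopping_rate f S u B c r'" for r'
    using assms that unfolding is_stopping_rate_def by (metis linorder_neqE_linordered_idom)
  then show ?thesis unfolding stopping_rate_def using assms by blast
qed

lemma truthful_rate_fun_upd_self:
  "truthful_rate f S u B (c(i := x)) i = truthful_rate f S u B c i"
  unfolding truthful_rate_def by simp

lemma P_ir_eq:
  assumes "0 < u i"
  shows "P_ir f u i r x = x * f_r f r (x / u i) + u i * integral {x / u i..} (f_r f r)"
  unfolding P_ir_def Q_r_def using assms by (simp add: algebra_simps)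

lemma P_ir_ge_cost:
  assumes "standard_alloc f" "0 < r" "0 < u i" "0 \<le> x"
  shows "x * f_r f r (x / u i) \<le> P_ir f u i r x"
proof -
  interpret antimono_vanishing "f_r f r" "r * (exp 1 - 1)"
    using standard_alloc_scaled assms by blast
  show ?thesis
    using assms tail_integral_nonneg[of "x / u i"] by (simp add: P_ir_eq)
qed

lemma P_ir_utility_le_truthful:
  assumes "standard_alloc f" "0 < r" "0 < u i" "0 \<le> x" "0 \<le> y"
  shows "P_ir f u i r y - x * f_r f r (y / u i) \<le> P_ir f u i r x - x * f_r f r (x / u i)"
proof -
  interpret antimono_vanishing "f_r f r" "r * (exp 1 - 1)"
    using standard_alloc_scaled assms by blast
  have "u i * ((y / u i - x / u i) * f_r f r (y / u i) + integral {y / u i..} (f_r f r))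
      \<le> u i * integral {x / u i..} (f_r f r)"
    using assms misreport_gain_le[of "x / u i" "y / u i"] by (intro mult_left_mono) auto
  then show ?thesis
    using assms by (simp add: P_ir_eq algebra_simps diff_divide_distrib)
qed

lemma P_ir_mono_rate:
  assumes std: "standard_alloc f" and r: "0 < r" "r \<le> r'" and "0 \<le> x" "0 < u i"
  shows "P_ir f u i r x \<le> P_ir f u i r' x"
proof -
  have f_antimono: "\<And>x y. 0 \<le> x \<Longrightarrow> x \<le> y \<Longrightarrow> f y \<le> f x"
    using std unfolding standard_alloc_def by blast
  have r': "0 < r'" using r by simp
  have f_r_le: "f_r f r y \<le> f_r f r' y" if "0 \<le> y" for y
    unfolding f_r_def using that r r' by (intro f_antimono) (auto simp: frac_le)
  have "integral {x / u i..} (f_r f r) \<le> integral {x / u i..} (f_r f r')"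
    using assms by (intro tail_integral_mono[OF standard_alloc_scaled[OF std r(1)]
          standard_alloc_scaled[OF std r'] f_r_le]) auto
  with assms f_r_le[of "x / u i"] show ?thesis
    by (simp add: P_ir_eq add_mono mult_left_mono)
qed

lemma P_ir_antimono_cost:
  assumes "standard_alloc f" "0 < r" "0 \<le> x" "x \<le> y" "0 < u i"
  shows "P_ir f u i r y \<le> P_ir f u i r x"
proof -
  interpret antimono_vanishing "f_r f r" "r * (exp 1 - 1)"
    using standard_alloc_scaled assms by blast
  have "u i * (y / u i * f_r f r (y / u i) + integral {y / u i..} (f_r f r))
      \<le> u i * (x / u i * f_r f r (x / u i) + integral {x / u i..} (f_r f r))"
    using assms by (intro mult_left_mono threshold_payment_antimono) (auto simp: divide_right_mono)
  then show ?thesis unfolding P_ir_def Q_r_def .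
qed

lemma truthful_budget_feasible:
  assumes std: "standard_alloc f" and fin: "finite S" and "B > 0"
    and u: "\<forall>i\<in>S. u i > 0" and c: "\<forall>i\<in>S. c i \<ge> 0"
    and rate: "\<And>i. i \<in> S \<Longrightarrow> is_stopping_rate f S u B (c(i := 0)) (r i)"
  shows "(\<Sum>i\<in>S. P_ir f u i (r i) (c i)) \<le> B"
proof (cases "S = {}")
  case True then show ?thesis using \<open>B > 0\<close> by simp
next
  case False
  have r_pos: "\<And>i. i \<in> S \<Longrightarrow> 0 < r i" using rate unfolding is_stopping_rate_def by blast
  have "Max (r ` S) \<in> r ` S" using fin False by simp
  then obtain i0 where i0: "i0 \<in> S" "r i0 = Max (r ` S)" by (auto simp: eq_commute)
  define R where "R = r i0"
  have "(\<Sum>i\<in>S. P_ir f u i (r i) (c i)) \<le> (\<Sum>i\<in>S. P_ir f u i R (c i))"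
    using u c r_pos fin i0 by (intro sum_mono P_ir_mono_rate[OF std]) (auto simp: R_def)
  also have "\<dots> \<le> (\<Sum>i\<in>S. P_ir f u i R ((c(i0 := 0)) i))"
    using u c r_pos[OF i0(1)] i0 P_ir_antimono_cost[OF std, of R 0 "c i0" u i0]
    by (intro sum_mono) (auto simp: R_def)
  also have "\<dots> = B"
    using rate[OF i0(1)] unfolding is_stopping_rate_def total_pay_def R_def by simp
  finally show ?thesis .
qed

theorem lemma2:
  fixes f :: "real \<Rightarrow> real" and S :: "'a set" and u c :: "'a \<Rightarrow> real" and B :: real
  assumes std: "standard_alloc f"
    and fin: "finite S"
    and B: "B > 0"
    and u: "\<forall>i\<in>S. u i > 0"
    and c: "\<forall>i\<in>S. c i \<ge> 0"
    and wd: "\<forall>i\<in>S. \<exists>r. is_stopping_rate f S u B (c(i := 0)) r"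
  shows "(\<forall>i\<in>S. truthful_pay f S u B c i \<ge> c i * truthful_alloc f S u B c i)
       \<and> (\<forall>i\<in>S. \<forall>cb \<ge> 0.
            truthful_pay f S u B (c(i := cb)) i - c i * truthful_alloc f S u B (c(i := cb)) i
              \<le> truthful_pay f S u B c i - c i * truthful_alloc f S u B c i)
       \<and> (\<Sum>i\<in>S. truthful_pay f S u B c i) \<le> B"
proof -
  obtain r where r: "\<And>i. i \<in> S \<Longrightarrow> is_stopping_rate f S u B (c(i := 0)) (r i)"
    using wd by metis
  have rate: "\<And>i. i \<in> S \<Longrightarrow> truthful_rate f S u B c i = r i"
    unfolding truthful_rate_def using r by (rule stopping_rate_eq)
  have r_pos: "\<And>i. i \<in> S \<Longrightarrow> 0 < r i" using r unfolding is_stopping_rate_def by blast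
  have "\<forall>i\<in>S. truthful_pay f S u B c i \<ge> c i * truthful_alloc f S u B c i"
    using u c r_pos
    by (auto simp: truthful_pay_def truthful_alloc_def rate intro: P_ir_ge_cost[OF std])
  moreover have "\<forall>i\<in>S. \<forall>cb \<ge> 0.
            truthful_pay f S u B (c(i := cb)) i - c i * truthful_alloc f S u B (c(i := cb)) i
              \<le> truthful_pay f S u B c i - c i * truthful_alloc f S u B c i"
    using u c r_pos
    by (auto intro!: P_ir_utility_le_truthful[OF std]
        simp: truthful_pay_def truthful_alloc_def truthful_rate_fun_upd_self rate)
  moreover have "(\<Sum>i\<in>S. truthful_pay f S u B c i) \<le> B"
    using truthful_budget_feasible[OF std fin B u c r] by (simp add: truthful_pay_def rate)
  ultimately show ?thesis by blast
qed

end
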